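(* Suppose that $K$ is algebraically closed and its residue class field $k$ has characteristic $p>0$. Then the set of equivalence classes of $K^\vee\setminus K$ under the relation $\sim$ is infinite.
   Context: $K$ is a complete non-archimedean non-trivially valued field which is not spherically complete; $K^\vee$ is a fixed spherically complete valued field which is an immediate extension of $K$. For $x,y\in K^\vee\setminus K$, $x\sim y$ means there exist $\lambda,\mu\in K$ with $|\lambda x+\mu-y|\le d(y,K)$, where $d(y,K)=\inf_{a\in K}|y-a|$; this is an equivalence relation on $K^\vee\setminus K$. *)

theory Defs
  imports "HOL-Computational_Algebra.Polynomial"
begin

definition nonarch_abs :: "('b::field \<Rightarrow> real) \<Rightarrow> bool" where
  "nonarch_abs v \<longleftrightarrow>
     (\<forall>x. v x \<ge> 0) \<and> (\<forall>x. v x = 0 \<longleftrightarrow> x = 0) \<and>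
     (\<forall>x y. v (x * y) = v x * v y) \<and> (\<forall>x y. v (x + y) \<le> max (v x) (v y))"

definition subfield :: "'b::field set \<Rightarrow> bool" where
  "subfield K \<longleftrightarrow> 0 \<in> K \<and> 1 \<in> K \<and>
     (\<forall>x\<in>K. \<forall>y\<in>K. x + y \<in> K \<and> x * y \<in> K) \<and>
     (\<forall>x\<in>K. - x \<in> K \<and> inverse x \<in> K)"

definition vball :: "('b::field \<Rightarrow> real) \<Rightarrow> 'b \<Rightarrow> real \<Rightarrow> 'b set" where
  "vball v c r = {y. v (y - c) \<le> r}"

definition spherically_complete :: "('b::field \<Rightarrow> real) \<Rightarrow> 'b set \<Rightarrow> bool" where
  "spherically_complete v S \<longleftrightarrow>
     (\<forall>F. F \<noteq> {} \<and> F \<subseteq> {S \<inter> vball v c r | c r. c \<in> S \<and> r > 0} \<and>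
          (\<forall>B\<in>F. \<forall>B'\<in>F. B \<subseteq> B' \<or> B' \<subseteq> B) \<longrightarrow> \<Inter>F \<noteq> {})"

definition vcomplete :: "('b::field \<Rightarrow> real) \<Rightarrow> 'b set \<Rightarrow> bool" where
  "vcomplete v S \<longleftrightarrow>
     (\<forall>f. (\<forall>n. f n \<in> S) \<and> (\<forall>e>0. \<exists>N. \<forall>m\<ge>N. \<forall>n\<ge>N. v (f m - f n) < e) \<longrightarrow>
          (\<exists>a\<in>S. (\<lambda>n. v (f n - a)) \<longlonglongrightarrow> 0))"

definition nontrivially_valued :: "('b::field \<Rightarrow> real) \<Rightarrow> 'b set \<Rightarrow> bool" where
  "nontrivially_valued v K \<longleftrightarrow> (\<exists>x\<in>K. x \<noteq> 0 \<and> v x \<noteq> 1)"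

text \<open>The whole field (UNIV) is an immediate extension of the subfield K:
  same value group and same residue class field.\<close>
definition immediate_ext :: "('b::field \<Rightarrow> real) \<Rightarrow> 'b set \<Rightarrow> bool" where
  "immediate_ext v K \<longleftrightarrow>
     v ` (UNIV - {0}) = v ` (K - {0}) \<and>
     (\<forall>x. v x \<le> 1 \<longrightarrow> (\<exists>a\<in>K. v (x - a) < 1))"

definition alg_closed_subfield :: "'b::field set \<Rightarrow> bool" where
  "alg_closed_subfield K \<longleftrightarrow>
     (\<forall>p :: 'b poly. degree p > 0 \<and> (\<forall>i. coeff p i \<in> K) \<longrightarrow> (\<exists>x\<in>K. poly p x = 0))"

text \<open>Characteristic of the residue class field of K: n*1 = 0 in the residue field
  iff v(n*1) < 1.\<close>
definition residue_char :: "('b::field \<Rightarrow> real) \<Rightarrow> nat" where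
  "residue_char v = (if \<exists>n>0. v (of_nat n) < 1 then (LEAST n. n > 0 \<and> v (of_nat n) < 1) else 0)"

definition dist_to :: "('b::field \<Rightarrow> real) \<Rightarrow> 'b \<Rightarrow> 'b set \<Rightarrow> real" where
  "dist_to v y K = (INF a\<in>K. v (y - a))"

definition sim_rel :: "('b::field \<Rightarrow> real) \<Rightarrow> 'b set \<Rightarrow> 'b \<Rightarrow> 'b \<Rightarrow> bool" where
  "sim_rel v K x y \<longleftrightarrow> (\<exists>l\<in>K. \<exists>m\<in>K. v (l * x + m - y) \<le> dist_to v y K)"

end

theory Submission
  imports Defs "HOL-Computational_Algebra.Primes"
begin

(* Write d(x) for the distance from x to K. Because the extension is immediate, d(x) is never
   attained for x outside K, and x ~ y forces d(y) = |l| d(x) for some nonzero l in K. Because K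
   is algebraically closed, monic polynomials over K split, so d(x)^(deg f) <= |f(x)|; together
   with the divisibility by p of the middle binomial coefficients this gives, after translating x
   by an element of K, d(x^p) = d(x)^p. If rho = d(x) is a value |h| of K, the elements
   x^p + c h^(p-1) x, with c running through representatives of the infinite residue field, are
   pairwise inequivalent. Otherwise rho is not in the divisible value group of K, and the
   iterated p-th powers, at distances rho^(p^n), are pairwise inequivalent. *)
locale nonarch_field =
  fixes v :: "'b::field \<Rightarrow> real"
  assumes nonarch: "nonarch_abs v"
begin

lemma v_nonneg [simp]: "0 \<le> v x"
  and v_eq_0_iff [simp]: "v x = 0 \<longleftrightarrow> x = 0"
  and v_mult: "v (x * y) = v x * v y"
  and v_add_le: "v (x + y) \<le> max (v x) (v y)"
  using nonarch unfolding nonarch_abs_def by auto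

lemma v_zero [simp]: "v 0 = 0"
  by simp

lemma v_pos: "x \<noteq> 0 \<Longrightarrow> 0 < v x"
  using v_nonneg[of x] v_eq_0_iff[of x] by linarith

lemma v_one [simp]: "v 1 = 1"
  using v_mult[of 1 1] v_pos[of 1] by simp

lemma v_minus [simp]: "v (- x) = v x"
proof -
  have "v (- 1) * v (- 1) = 1"
    using v_mult[of "- 1" "- 1"] by simp
  then have "v (- 1) = 1"
    using v_nonneg[of "- 1"] by (auto simp: square_eq_1_iff)
  then show ?thesis
    using v_mult[of "- 1" x] by simp
qed

lemma v_diff_commute: "v (x - y) = v (y - x)"
  by (metis minus_diff_eq v_minus)

lemma v_diff_le: "v (x - y) \<le> max (v x) (v y)"
  using v_add_le[of x "- y"] by simp

lemma v_diff_triangle: "v (x - z) \<le> max (v (x - y)) (v (y - z))"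
  using v_add_le[of "x - y" "y - z"] by simp

lemma v_add_eq_left: "v y < v x \<Longrightarrow> v (x + y) = v x"
  using v_add_le[of x y] v_add_le[of "x + y" "- y"] by auto

lemma v_power: "v (x ^ n) = v x ^ n"
  by (induct n) (auto simp: v_mult)

lemma v_inverse: "v (inverse x) = inverse (v x)"
proof (cases "x = 0")
  case False
  then have "v x * v (inverse x) = 1"
    by (simp flip: v_mult)
  then show ?thesis
    by (metis inverse_unique)
qed simp

lemma v_divide: "v (x / y) = v x / v y"
  by (simp add: divide_inverse v_mult v_inverse)

lemma v_prod: "v (prod f A) = (\<Prod>i\<in>A. v (f i))"
  by (induct A rule: infinite_finite_induct) (auto simp: v_mult)

lemma v_sum_le: "(\<And>i. i \<in> A \<Longrightarrow> v (f i) \<le> M) \<Longrightarrow> 0 \<le> M \<Longrightarrow> v (sum f A) \<le> M"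
proof (induct A rule: infinite_finite_induct)
  case (insert x F)
  then show ?case
    using v_add_le[of "f x" "sum f F"] by force
qed auto

lemma v_of_nat_le_one: "v (of_nat n) \<le> 1"
proof (induct n)
  case (Suc n)
  then show ?case
    using v_add_le[of 1 "of_nat n"] by simp
qed simp

end

locale positive_residue_char = nonarch_field +
  fixes p :: nat
  assumes residue_char_eq: "residue_char v = p" and residue_char_pos: "0 < p"
begin

lemma residue_char_Least:
  "\<exists>n>0. v (of_nat n) < 1" "p = (LEAST n. 0 < n \<and> v (of_nat n) < 1)"
  using residue_char_eq residue_char_pos unfolding residue_char_def by (auto split: if_splits)

lemma v_of_nat_p_less_one: "v (of_nat p) < 1"
  using LeastI_ex[OF residue_char_Least(1)] unfolding residue_char_Least(2)[symmetric] by blast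

lemma v_of_nat_below_p: "0 < n \<Longrightarrow> n < p \<Longrightarrow> v (of_nat n) = 1"
  using not_less_Least[of n "\<lambda>n. 0 < n \<and> v (of_nat n) < 1"] v_of_nat_le_one[of n]
  unfolding residue_char_Least(2)[symmetric] by fastforce

lemma p_ge_2: "2 \<le> p"
  using v_of_nat_p_less_one residue_char_pos by (cases "p = 1") auto

lemma p_prime: "prime p"
proof -
  have "m = 1 \<or> m = p" if "m dvd p" for m
  proof (rule ccontr)
    assume m: "\<not> (m = 1 \<or> m = p)"
    obtain k where k: "p = m * k"
      using \<open>m dvd p\<close> by blast
    have "0 < m" "0 < k"
      using k residue_char_pos by (auto intro: Nat.gr0I)
    have "m \<le> p" "k \<le> p"
      using k residue_char_pos by (simp_all add: dvd_imp_le)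
    moreover have "m \<noteq> p" "k \<noteq> p"
      using k m residue_char_pos by auto
    ultimately have "m < p" "k < p"
      by simp_all
    have "v (of_nat p) = v (of_nat m) * v (of_nat k)"
      unfolding k by (simp add: v_mult)
    also have "\<dots> = 1"
      using v_of_nat_below_p \<open>0 < m\<close> \<open>0 < k\<close> \<open>m < p\<close> \<open>k < p\<close> by simp
    finally show False
      using v_of_nat_p_less_one by simp
  qed
  then show ?thesis
    using p_ge_2 by (simp add: prime_nat_iff)
qed

lemma v_binomial_le:
  assumes "0 < k" "k < p"
  shows "v (of_nat (p choose k)) \<le> v (of_nat p)"
proof -
  have "p dvd (p choose k)"
    using assms p_prime by (intro dvd_choose_prime) auto
  then obtain m where "p choose k = p * m"
    by (elim dvdE)
  then show ?thesis
    using v_of_nat_le_one[of m] v_nonneg[of "of_nat p"] by (simp add: v_mult mult_left_le)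
qed

text \<open>The middle binomial coefficients are divisible by \<open>p\<close>, hence small; this is why
  \<open>(a + t)^p\<close> stays close to \<open>a^p\<close>.\<close>
lemma v_add_power_diff_le:
  assumes t: "v t \<le> s" and a: "v a \<le> s0" and "s \<le> s0"
    and small: "v (of_nat p) * s0 ^ (p - 1) \<le> s ^ (p - 1)"
  shows "v ((a + t) ^ p - a ^ p) \<le> s ^ p"
proof -
  define f where "f k = of_nat (p choose k) * t ^ k * a ^ (p - k)" for k
  have "(a + t) ^ p = (\<Sum>k\<le>p. f k)"
    unfolding f_def using binomial_ring[of t a p] by (simp add: add.commute)
  also have "\<dots> = a ^ p + (\<Sum>i<p. f (Suc i))"
    by (subst sum.atMost_shift) (simp add: f_def)
  finally have expand: "(a + t) ^ p - a ^ p = (\<Sum>i<p. f (Suc i))"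
    by simp
  have s: "0 \<le> s"
    using t v_nonneg[of t] by linarith
  have "v (f k) \<le> s ^ p" if k: "0 < k" "k \<le> p" for k
  proof (cases "k = p")
    case True
    then show ?thesis
      using t s by (simp add: f_def v_mult v_power power_mono)
  next
    case False
    then have "k < p"
      using k by simp
    have "v (f k) \<le> v (of_nat p) * s ^ k * s0 ^ (p - k)"
      unfolding f_def v_mult v_power
      using s v_binomial_le[OF k(1) \<open>k < p\<close>] t a
      by (intro mult_mono power_mono) auto
    also have "\<dots> = s * (v (of_nat p) * (s ^ (k - 1) * s0 ^ (p - k)))"
      using power_minus_mult[OF k(1), of s] by (simp add: ac_simps)
    also have "\<dots> \<le> s * (v (of_nat p) * (s0 ^ (k - 1) * s0 ^ (p - k)))"
      using s \<open>s \<le> s0\<close> by (intro mult_left_mono mult_right_mono power_mono) auto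
    also have "s0 ^ (k - 1) * s0 ^ (p - k) = s0 ^ (p - 1)"
      using k \<open>k < p\<close> by (simp flip: power_add)
    also have "s * (v (of_nat p) * s0 ^ (p - 1)) \<le> s * s ^ (p - 1)"
      using small s by (rule mult_left_mono)
    also have "\<dots> = s ^ p"
      using power_minus_mult[OF residue_char_pos, of s] by (simp add: ac_simps)
    finally show ?thesis .
  qed
  then have "v (\<Sum>i<p. f (Suc i)) \<le> s ^ p"
    using s by (intro v_sum_le) auto
  then show ?thesis
    using expand by simp
qed

end

definition poly_over :: "'a::zero set \<Rightarrow> 'a poly \<Rightarrow> bool" where
  "poly_over K f \<longleftrightarrow> (\<forall>i. coeff f i \<in> K)"

lemma alg_closed_subfieldD:
  "alg_closed_subfield K \<Longrightarrow> poly_over K f \<Longrightarrow> 0 < degree f \<Longrightarrow> \<exists>x\<in>K. poly f x = 0"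
  unfolding alg_closed_subfield_def poly_over_def by blast

locale subfield_set =
  fixes K :: "'b::field set"
  assumes subfield: "subfield K"
begin

lemma zero_closed: "0 \<in> K"
  and one_closed: "1 \<in> K"
  and add_closed: "x \<in> K \<Longrightarrow> y \<in> K \<Longrightarrow> x + y \<in> K"
  and mult_closed: "x \<in> K \<Longrightarrow> y \<in> K \<Longrightarrow> x * y \<in> K"
  and uminus_closed: "x \<in> K \<Longrightarrow> - x \<in> K"
  and inverse_closed: "x \<in> K \<Longrightarrow> inverse x \<in> K"
  using subfield unfolding subfield_def by auto

lemma diff_closed: "x \<in> K \<Longrightarrow> y \<in> K \<Longrightarrow> x - y \<in> K"
  using add_closed uminus_closed by (metis diff_conv_add_uminus)

lemma divide_closed: "x \<in> K \<Longrightarrow> y \<in> K \<Longrightarrow> x / y \<in> K"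
  by (simp add: divide_inverse mult_closed inverse_closed)

lemma power_closed: "x \<in> K \<Longrightarrow> x ^ n \<in> K"
  by (induct n) (auto simp: one_closed mult_closed)

lemma sum_closed: "(\<And>i. i \<in> A \<Longrightarrow> f i \<in> K) \<Longrightarrow> sum f A \<in> K"
  by (induct A rule: infinite_finite_induct) (auto simp: zero_closed add_closed)

lemma poly_over_pCons [simp]: "poly_over K (pCons a f) \<longleftrightarrow> a \<in> K \<and> poly_over K f"
  unfolding poly_over_def by (auto simp: coeff_pCons split: nat.splits)

lemma poly_over_0 [simp]: "poly_over K 0"
  by (simp add: poly_over_def zero_closed)

lemma poly_over_1 [simp]: "poly_over K 1"
  by (simp add: one_pCons one_closed)

lemma poly_over_add: "poly_over K f \<Longrightarrow> poly_over K g \<Longrightarrow> poly_over K (f + g)"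
  by (simp add: poly_over_def add_closed)

lemma poly_over_mult: "poly_over K f \<Longrightarrow> poly_over K g \<Longrightarrow> poly_over K (f * g)"
  unfolding poly_over_def coeff_mult by (intro allI sum_closed) (simp add: mult_closed)

lemma poly_over_prod: "(\<And>i. i \<in> A \<Longrightarrow> poly_over K (f i)) \<Longrightarrow> poly_over K (prod f A)"
  by (induct A rule: infinite_finite_induct) (auto simp: poly_over_mult)

lemma poly_over_monom: "c \<in> K \<Longrightarrow> poly_over K (monom c n)"
  using zero_closed by (simp add: poly_over_def)

lemma poly_closed: "poly_over K f \<Longrightarrow> c \<in> K \<Longrightarrow> poly f c \<in> K"
  by (induct f) (auto simp: zero_closed add_closed mult_closed)

lemma poly_over_synthetic_div: "poly_over K f \<Longrightarrow> c \<in> K \<Longrightarrow> poly_over K (synthetic_div f c)"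
  by (induct f) (auto simp: poly_closed)

lemma poly_over_x_power_plus_linear:
  "a \<in> K \<Longrightarrow> b \<in> K \<Longrightarrow> poly_over K (monom 1 n + [:b, a:])"
  by (intro poly_over_add poly_over_monom) (auto simp: one_closed)

end

lemma degree_x_power_plus_linear:
  fixes a b :: "'a::field"
  shows "2 \<le> n \<Longrightarrow> degree (monom 1 n + [:b, a:]) = n"
  by (subst degree_add_eq_left) (auto simp: degree_monom_eq)

lemma lead_coeff_x_power_plus_linear:
  fixes a b :: "'a::field"
  shows "2 \<le> n \<Longrightarrow> lead_coeff (monom 1 n + [:b, a:]) = 1"
  by (simp add: degree_x_power_plus_linear coeff_pCons split: nat.splits)

locale valued_subfield = nonarch_field v + subfield_set K
  for v :: "'b::field \<Rightarrow> real" and K :: "'b set"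
begin

abbreviation distK :: "'b \<Rightarrow> real" where
  "distK x \<equiv> dist_to v x K"

lemma dist_le: "a \<in> K \<Longrightarrow> distK x \<le> v (x - a)"
  unfolding dist_to_def by (rule cINF_lower) (auto intro: bdd_belowI[of _ 0])

lemma dist_greatest: "(\<And>a. a \<in> K \<Longrightarrow> c \<le> v (x - a)) \<Longrightarrow> c \<le> distK x"
  unfolding dist_to_def using zero_closed by (intro cINF_greatest) auto

lemma dist_nonneg: "0 \<le> distK x"
  by (rule dist_greatest) simp

lemma dist_approx: "0 < e \<Longrightarrow> \<exists>a\<in>K. v (x - a) < distK x + e"
  using dist_greatest[of "distK x + e" x] by force

lemma dist_of_mem: "x \<in> K \<Longrightarrow> distK x = 0"
  using dist_le[of x x] dist_nonneg[of x] by simp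

lemma not_mem_if_dist_pos: "0 < distK x \<Longrightarrow> x \<notin> K"
  using dist_of_mem by force

lemma dist_add_le: "distK (x + y) \<le> max (distK x) (distK y)"
proof (rule field_le_epsilon)
  fix e :: real
  assume "0 < e"
  then obtain a b where "a \<in> K" "v (x - a) < distK x + e" "b \<in> K" "v (y - b) < distK y + e"
    using dist_approx by meson
  moreover have "distK (x + y) \<le> max (v (x - a)) (v (y - b))"
    using dist_le[OF add_closed[OF \<open>a \<in> K\<close> \<open>b \<in> K\<close>], of "x + y"] v_add_le[of "x - a" "y - b"]
    by (simp add: algebra_simps)
  ultimately show "distK (x + y) \<le> max (distK x) (distK y) + e"
    by linarith
qed

lemma dist_mult_le: "c \<in> K \<Longrightarrow> distK (c * x) \<le> v c * distK x"
proof (cases "c = 0")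
  case False
  assume "c \<in> K"
  have "distK (c * x) / v c \<le> v (x - a)" if "a \<in> K" for a
  proof -
    have "distK (c * x) \<le> v (c * x - c * a)"
      using dist_le mult_closed[OF \<open>c \<in> K\<close> \<open>a \<in> K\<close>] by blast
    also have "\<dots> = v c * v (x - a)"
      by (metis right_diff_distrib v_mult)
    finally show ?thesis
      using v_pos[OF False] by (simp add: pos_divide_le_eq ac_simps)
  qed
  then have "distK (c * x) / v c \<le> distK x"
    by (rule dist_greatest)
  then show ?thesis
    using v_pos[OF False] by (simp add: pos_divide_le_eq ac_simps)
qed (simp add: dist_of_mem zero_closed)

lemma dist_mult: "c \<in> K \<Longrightarrow> distK (c * x) = v c * distK x"
proof (cases "c = 0")
  case False
  assume "c \<in> K"
  have "distK x \<le> v (inverse c) * distK (c * x)"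
    using dist_mult_le[OF inverse_closed[OF \<open>c \<in> K\<close>], of "c * x"] False
    by (simp add: field_simps)
  then have "v c * distK x \<le> distK (c * x)"
    using v_pos[OF False] by (simp add: v_divide field_simps)
  then show ?thesis
    using dist_mult_le[OF \<open>c \<in> K\<close>, of x] by linarith
qed (simp add: dist_of_mem zero_closed)

lemma dist_minus [simp]: "distK (- x) = distK x"
  using dist_mult[OF uminus_closed[OF one_closed], of x] by simp

lemma dist_diff_le: "distK (x - y) \<le> max (distK x) (distK y)"
  using dist_add_le[of x "- y"] by simp

lemma dist_add_eq_left: "distK y < distK x \<Longrightarrow> distK (x + y) = distK x"
  using dist_add_le[of x y] dist_diff_le[of "x + y" y] by auto

lemma dist_add_mem: "m \<in> K \<Longrightarrow> distK (x + m) = distK x"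
  using dist_add_le[of x m] dist_diff_le[of "x + m" m] dist_of_mem[of m]
    dist_nonneg[of x] dist_nonneg[of "x + m"]
  by simp


text \<open>Since the residue field does not grow, a best approximation \<open>a\<close> of \<open>x\<close> could be
  improved by a suitable multiple of an element of \<open>K\<close> of the same value as \<open>x - a\<close>.\<close>
lemma dist_not_attained:
  assumes imm: "immediate_ext v K" and "x \<notin> K" "a \<in> K"
  shows "distK x < v (x - a)"
proof (rule ccontr)
  assume "\<not> ?thesis"
  then have attained: "v (x - a) = distK x"
    using dist_le[OF \<open>a \<in> K\<close>, of x] by linarith
  have "x - a \<noteq> 0"
    using assms by auto
  then have "v (x - a) \<in> v ` (K - {0})"
    using imm unfolding immediate_ext_def by blast
  then obtain c where c: "c \<in> K" "c \<noteq> 0" "v c = v (x - a)"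
    by (metis DiffE image_iff singletonI)
  then have "v ((x - a) / c) \<le> 1"
    by (simp add: v_divide)
  then obtain b where b: "b \<in> K" "v ((x - a) / c - b) < 1"
    using imm unfolding immediate_ext_def by blast
  have "(x - a) / c - b = (x - (a + b * c)) / c"
    using c(2) by (simp add: field_simps)
  then have "v (x - (a + b * c)) < v c"
    using b(2) v_pos[OF c(2)] by (simp add: v_divide divide_less_eq)
  moreover have "distK x \<le> v (x - (a + b * c))"
    using dist_le add_closed mult_closed b(1) c(1) \<open>a \<in> K\<close> by blast
  ultimately show False
    using c(3) attained by simp
qed

lemma dist_pos:
  assumes comp: "vcomplete v K" and "x \<notin> K"
  shows "0 < distK x"
proof (rule ccontr)
  assume "\<not> ?thesis"
  then have "distK x = 0"
    using dist_nonneg[of x] by simp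
  then have "\<exists>a\<in>K. v (x - a) < inverse (real (Suc n))" for n
    using dist_approx[of "inverse (real (Suc n))" x] by simp
  then obtain f where f: "\<And>n. f n \<in> K" "\<And>n. v (x - f n) < inverse (real (Suc n))"
    by metis
  have "v (x - f n) \<le> inverse (real (Suc n))" for n
    using f(2) less_imp_le by blast
  then have lim: "(\<lambda>n. v (x - f n)) \<longlonglongrightarrow> 0"
    by (intro tendsto_sandwich[OF always_eventually always_eventually
          tendsto_const LIMSEQ_inverse_real_of_nat]) auto
  have "\<exists>N. \<forall>m\<ge>N. \<forall>n\<ge>N. v (f m - f n) < e" if "0 < e" for e
  proof -
    obtain N where N: "\<And>n. N \<le> n \<Longrightarrow> v (x - f n) < e"
      using order_tendstoD(2)[OF lim \<open>0 < e\<close>] unfolding eventually_sequentially by blast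
    have "v (f m - f n) < e" if "N \<le> m" "N \<le> n" for m n
    proof -
      have "v (f m - f n) \<le> max (v (x - f m)) (v (x - f n))"
        using v_diff_triangle[of "f m" "f n" x] v_diff_commute[of "f m" x] by simp
      also have "\<dots> < e"
        using N that by simp
      finally show ?thesis .
    qed
    then show ?thesis
      by blast
  qed
  then obtain a where a: "a \<in> K" "(\<lambda>n. v (f n - a)) \<longlonglongrightarrow> 0"
    using comp f(1) unfolding vcomplete_def by blast
  have "(\<lambda>n. max (v (x - f n)) (v (f n - a))) \<longlonglongrightarrow> 0"
    using tendsto_max[OF lim a(2)] by simp
  then have "v (x - a) \<le> 0"
    by (rule tendsto_lowerbound) (simp_all add: v_diff_triangle)
  then show False
    using a(1) \<open>x \<notin> K\<close> v_nonneg[of "x - a"] by auto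
qed

text \<open>Over an algebraically closed \<open>K\<close> a monic polynomial splits into linear factors \<open>X - b\<close>
  with \<open>b \<in> K\<close>, each of which has value at least \<open>distK x\<close> at \<open>x\<close>.\<close>
lemma dist_power_degree_le:
  assumes acl: "alg_closed_subfield K"
  shows "poly_over K f \<Longrightarrow> lead_coeff f = 1 \<Longrightarrow> distK x ^ degree f \<le> v (poly f x)"
proof (induct "degree f" arbitrary: f)
  case 0
  then have "f = 1"
    by (metis degree_eq_zeroE coeff_pCons_0 one_pCons)
  then show ?case
    by simp
next
  case (Suc n)
  obtain b where b: "b \<in> K" "poly f b = 0"
    using alg_closed_subfieldD[OF acl \<open>poly_over K f\<close>] Suc(2) by auto
  define g where "g = synthetic_div f b"
  have f: "f = [:- b, 1:] * g"
    using synthetic_div_correct'[of b f] b(2) unfolding g_def by simp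
  have g: "poly_over K g" "degree g = n"
    unfolding g_def using poly_over_synthetic_div Suc b(1) by (auto simp: degree_synthetic_div)
  moreover have "lead_coeff g = 1"
    using Suc(4) f by (metis lead_coeff_mult lead_coeff_pCons(1) mult_1 one_neq_zero pCons_one)
  ultimately have IH: "distK x ^ n \<le> v (poly g x)"
    using Suc(1)[of g] by simp
  have "poly f x = (x - b) * poly g x"
    by (subst f) (simp add: algebra_simps)
  then have "v (poly f x) = v (x - b) * v (poly g x)"
    by (simp add: v_mult)
  moreover have "distK x \<le> v (x - b)"
    using dist_le[OF b(1)] .
  ultimately show ?case
    using IH Suc(2)[symmetric] dist_nonneg[of x] by (simp add: mult_mono del: v_eq_0_iff)
qed

lemma dist_power_minus_linear_ge:
  assumes acl: "alg_closed_subfield K" and "2 \<le> n" "l \<in> K"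
  shows "distK x ^ n \<le> distK (x ^ n - l * x)"
proof (rule dist_greatest)
  fix b
  assume "b \<in> K"
  let ?f = "monom 1 n + [:- b, - l:]"
  have "distK x ^ degree ?f \<le> v (poly ?f x)"
    using assms \<open>b \<in> K\<close>
    by (intro dist_power_degree_le poly_over_x_power_plus_linear lead_coeff_x_power_plus_linear
        uminus_closed)
  then show "distK x ^ n \<le> v (x ^ n - l * x - b)"
    by (simp add: degree_x_power_plus_linear[OF \<open>2 \<le> n\<close>] poly_monom algebra_simps)
qed

lemma exists_power_root:
  assumes acl: "alg_closed_subfield K" and "0 < N" "c \<in> K"
  shows "\<exists>h\<in>K. h ^ N = c"
proof -
  let ?f = "monom 1 N + [:- c:]"
  have "poly_over K ?f"
    using assms by (intro poly_over_add poly_over_monom) (auto simp: one_closed uminus_closed)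
  moreover have "degree ?f = N"
    using \<open>0 < N\<close> by (subst degree_add_eq_left) (auto simp: degree_monom_eq)
  ultimately obtain h where "h \<in> K" "poly ?f h = 0"
    using alg_closed_subfieldD[OF acl] \<open>0 < N\<close> by metis
  then show ?thesis
    by (auto simp: poly_monom)
qed

lemma exists_v_eq_root:
  assumes acl: "alg_closed_subfield K" and "0 < N" "l \<in> K" "v l = r ^ N" "0 \<le> r"
  shows "\<exists>h\<in>K. v h = r"
proof -
  obtain h where "h \<in> K" "h ^ N = l"
    using exists_power_root[OF acl \<open>0 < N\<close> \<open>l \<in> K\<close>] by blast
  then have "v h ^ N = r ^ N"
    using assms(4) by (simp flip: v_power)
  then have "v h = r"
    using \<open>0 < N\<close> \<open>0 \<le> r\<close> by (simp add: power_eq_imp_eq_base)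
  then show ?thesis
    using \<open>h \<in> K\<close> by blast
qed

lemma exists_v_eq_of_power_ratio:
  assumes acl: "alg_closed_subfield K" and "l \<in> K" "l \<noteq> 0" "0 < r"
    and ratio: "r ^ m = v l * r ^ n" and "m \<noteq> n"
  shows "\<exists>h\<in>K. v h = r"
proof (cases "n < m")
  case True
  then have "v l = r ^ (m - n)"
    using ratio \<open>0 < r\<close> by (simp add: power_diff)
  then show ?thesis
    using True assms by (intro exists_v_eq_root[of "m - n" l]) auto
next
  case False
  then have "v (inverse l) = r ^ (n - m)"
    using ratio \<open>0 < r\<close> \<open>m \<noteq> n\<close> \<open>l \<noteq> 0\<close> by (simp add: power_diff v_divide field_simps)
  then show ?thesis
    using False assms
    by (intro exists_v_eq_root[of "n - m" "inverse l"]) (auto simp: inverse_closed)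
qed


text \<open>A root \<open>x\<close> of \<open>1 + \<Prod>f\<in>F. (X - f)\<close> satisfies \<open>\<Prod>f\<in>F. v (x - f) = 1\<close> with all factors
  at most \<open>1\<close>, so every factor equals \<open>1\<close>.\<close>
lemma exists_residue_avoiding:
  assumes acl: "alg_closed_subfield K" and "finite F" and F: "F \<subseteq> {c \<in> K. v c \<le> 1}"
  shows "\<exists>c\<in>K. v c \<le> 1 \<and> (\<forall>f\<in>F. 1 \<le> v (c - f))"
proof (cases "F = {}")
  case True
  then show ?thesis
    using zero_closed by (intro bexI[of _ 0]) auto
next
  case False
  define Q where "Q = (\<Prod>f\<in>F. [:- f, 1:])"
  have "poly_over K (1 + Q)"
    unfolding Q_def using F
    by (intro poly_over_add poly_over_prod) (auto simp: uminus_closed one_closed)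
  moreover have "degree Q = card F"
    unfolding Q_def by (subst degree_prod_eq_sum_degree) auto
  then have "0 < degree (1 + Q)"
    using False \<open>finite F\<close> by (subst degree_add_eq_right) (auto simp: card_gt_0_iff)
  ultimately obtain x where x: "x \<in> K" "poly (1 + Q) x = 0"
    using alg_closed_subfieldD[OF acl] by blast
  then have "(\<Prod>f\<in>F. x - f) = - 1"
    unfolding Q_def poly_add poly_prod by (simp add: add_eq_0_iff algebra_simps)
  then have prod_one: "(\<Prod>f\<in>F. v (x - f)) = 1"
    using v_prod[of "\<lambda>f. x - f" F] by simp
  have "v x \<le> 1"
  proof (rule ccontr)
    assume "\<not> v x \<le> 1"
    then have "v (x - f) = v x" if "f \<in> F" for f
      using v_add_eq_left[of "- f" x] F that by auto
    then have "(\<Prod>f\<in>F. v (x - f)) = v x ^ card F"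
      by simp
    moreover have "1 < v x ^ card F"
      using \<open>\<not> v x \<le> 1\<close> False \<open>finite F\<close> by (simp add: card_gt_0_iff)
    ultimately show False
      using prod_one by simp
  qed
  then have le_one: "v (x - f) \<le> 1" if "f \<in> F" for f
    using v_diff_le[of x f] F that by auto
  have "1 \<le> v (x - f)" if "f \<in> F" for f
  proof (rule ccontr)
    assume "\<not> 1 \<le> v (x - f)"
    have "(\<Prod>f\<in>F. v (x - f)) = v (x - f) * (\<Prod>g\<in>F - {f}. v (x - g))"
      using that \<open>finite F\<close> by (simp add: prod.remove)
    also have "\<dots> \<le> v (x - f) * 1"
      using le_one by (intro mult_left_mono prod_le_1) auto
    also have "\<dots> < 1"
      using \<open>\<not> 1 \<le> v (x - f)\<close> by simp
    finally show False
      using prod_one by simp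
  qed
  then show ?thesis
    using x(1) \<open>v x \<le> 1\<close> by blast
qed

lemma exists_residue_representatives:
  assumes acl: "alg_closed_subfield K"
  shows "\<exists>S\<subseteq>{c \<in> K. v c \<le> 1}. finite S \<and> card S = n \<and>
    (\<forall>c\<in>S. \<forall>c'\<in>S. c \<noteq> c' \<longrightarrow> 1 \<le> v (c - c'))"
proof (induct n)
  case 0
  show ?case
    by (intro exI[of _ "{}"]) auto
next
  case (Suc n)
  then obtain S where S: "S \<subseteq> {c \<in> K. v c \<le> 1}" "finite S" "card S = n"
    "\<forall>c\<in>S. \<forall>c'\<in>S. c \<noteq> c' \<longrightarrow> 1 \<le> v (c - c')"
    by blast
  obtain c where c: "c \<in> K" "v c \<le> 1" "\<forall>f\<in>S. 1 \<le> v (c - f)"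
    using exists_residue_avoiding[OF acl S(2,1)] by blast
  then have "c \<notin> S"
    by force
  show ?case
  proof (intro exI[of _ "insert c S"] conjI)
    show "card (insert c S) = Suc n"
      using S(2,3) \<open>c \<notin> S\<close> by simp
    show "\<forall>a\<in>insert c S. \<forall>b\<in>insert c S. a \<noteq> b \<longrightarrow> 1 \<le> v (a - b)"
      using S(4) c(3) v_diff_commute by auto
  qed (use S c in auto)
qed

lemma sim_rel_refl: "sim_rel v K x x"
  unfolding sim_rel_def using zero_closed one_closed dist_nonneg[of x]
  by (intro bexI[of _ 1] bexI[of _ 0]) auto

lemma sim_rel_imp_dist_less:
  assumes imm: "immediate_ext v K" and "sim_rel v K x y" and "0 < distK y"
  shows "\<exists>l\<in>K. distK (l * x - y) < distK y"
proof -
  obtain l m where "l \<in> K" "m \<in> K" and close: "v (l * x + m - y) \<le> distK y"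
    using \<open>sim_rel v K x y\<close> unfolding sim_rel_def by blast
  have "distK (l * x + m - y) < distK y"
  proof (cases "l * x + m - y \<in> K")
    case True
    then show ?thesis
      using dist_of_mem \<open>0 < distK y\<close> by simp
  next
    case False
    then have "distK (l * x + m - y) < v (l * x + m - y - 0)"
      by (rule dist_not_attained[OF imm _ zero_closed])
    then show ?thesis
      using close by simp
  qed
  moreover have "distK (l * x + m - y) = distK (l * x - y)"
    using dist_add_mem[OF \<open>m \<in> K\<close>, of "l * x - y"] by (simp add: algebra_simps)
  ultimately show ?thesis
    using \<open>l \<in> K\<close> by auto
qed

lemma sim_rel_dist_ratio:
  assumes imm: "immediate_ext v K" and "sim_rel v K x y" and "0 < distK y"
  shows "\<exists>l\<in>K. l \<noteq> 0 \<and> distK y = v l * distK x"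
proof -
  obtain l where "l \<in> K" and less: "distK (l * x - y) < distK y"
    using sim_rel_imp_dist_less[OF assms] by blast
  have "distK (l * x) = distK (y + (l * x - y))"
    by simp
  also have "\<dots> = distK y"
    using less by (rule dist_add_eq_left)
  finally have "distK y = v l * distK x"
    using dist_mult[OF \<open>l \<in> K\<close>] by simp
  moreover have "l \<noteq> 0"
    using less by auto
  ultimately show ?thesis
    using \<open>l \<in> K\<close> by blast
qed

lemma dist_pencil_eq:
  assumes dist_y: "distK y = \<delta>" and dist_z: "distK z = \<delta>"
    and indep: "\<And>l. l \<in> K \<Longrightarrow> \<delta> \<le> distK (z - l * y)"
    and "c \<in> K" "v c \<le> 1"
  shows "distK (z + c * y) = \<delta>"
proof (rule antisym)
  show "distK (z + c * y) \<le> \<delta>"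
    using dist_add_le[of z "c * y"] dist_mult[OF \<open>c \<in> K\<close>, of y] dist_y dist_z \<open>v c \<le> 1\<close>
      dist_nonneg[of y]
    by (simp add: mult_left_le_one_le)
  show "\<delta> \<le> distK (z + c * y)"
    using indep[OF uminus_closed[OF \<open>c \<in> K\<close>]] by simp
qed

lemma dist_pencil_combination_ge:
  assumes indep: "\<And>l. l \<in> K \<Longrightarrow> \<delta> \<le> distK (z - l * y)" and "\<alpha> \<in> K" "\<beta> \<in> K"
  shows "v \<beta> * \<delta> \<le> distK (\<beta> * z + \<alpha> * y)"
proof (cases "\<beta> = 0")
  case False
  have "\<delta> \<le> distK (z - (- (\<alpha> / \<beta>)) * y)"
    using indep[OF uminus_closed[OF divide_closed[OF \<open>\<alpha> \<in> K\<close> \<open>\<beta> \<in> K\<close>]]] .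
  then have "v \<beta> * \<delta> \<le> v \<beta> * distK (z - (- (\<alpha> / \<beta>)) * y)"
    by (rule mult_left_mono) simp
  also have "\<dots> = distK (\<beta> * (z - (- (\<alpha> / \<beta>)) * y))"
    using dist_mult[OF \<open>\<beta> \<in> K\<close>] by simp
  also have "\<beta> * (z - (- (\<alpha> / \<beta>)) * y) = \<beta> * z + \<alpha> * y"
    using False by (simp add: field_simps)
  finally show ?thesis .
qed (simp add: dist_nonneg)

text \<open>Writing \<open>l (z + c y) - (z + c' y) = \<beta> z + \<alpha> y\<close>, closeness forces \<open>v \<beta> < 1\<close>, hence
  \<open>v \<alpha> = v (c - c') \<ge> 1\<close>, and then \<open>\<alpha> y\<close> is too far from \<open>K\<close>.\<close>
lemma not_sim_rel_pencil:
  assumes imm: "immediate_ext v K" and "0 < \<delta>"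
    and dist_y: "distK y = \<delta>" and dist_z: "distK z = \<delta>"
    and indep: "\<And>l. l \<in> K \<Longrightarrow> \<delta> \<le> distK (z - l * y)"
    and c: "c \<in> K" "v c \<le> 1" and c': "c' \<in> K" "v c' \<le> 1" and far: "1 \<le> v (c - c')"
  shows "\<not> sim_rel v K (z + c * y) (z + c' * y)"
proof
  assume sim: "sim_rel v K (z + c * y) (z + c' * y)"
  obtain l where "l \<in> K" and less: "distK (l * (z + c * y) - (z + c' * y)) < \<delta>"
    using sim_rel_imp_dist_less[OF imm sim] dist_pencil_eq[OF dist_y dist_z indep c'] \<open>0 < \<delta>\<close>
    by auto
  define \<beta> where "\<beta> = l - 1"
  define \<alpha> where "\<alpha> = l * c - c'"
  have "\<beta> \<in> K"
    unfolding \<beta>_def using \<open>l \<in> K\<close> one_closed by (rule diff_closed)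
  have "\<alpha> \<in> K"
    unfolding \<alpha>_def using mult_closed[OF \<open>l \<in> K\<close> c(1)] c'(1) by (rule diff_closed)
  have w: "l * (z + c * y) - (z + c' * y) = \<beta> * z + \<alpha> * y"
    unfolding \<beta>_def \<alpha>_def by (simp add: algebra_simps)
  have "v \<beta> * \<delta> < 1 * \<delta>"
    using dist_pencil_combination_ge[OF indep \<open>\<alpha> \<in> K\<close> \<open>\<beta> \<in> K\<close>] less w by simp
  then have "v \<beta> < 1"
    by (rule mult_right_less_imp_less) (use \<open>0 < \<delta>\<close> in simp)
  have "1 \<le> v \<alpha>"
  proof -
    have "\<alpha> = (c - c') + \<beta> * c"
      unfolding \<alpha>_def \<beta>_def by (simp add: algebra_simps)
    moreover have "v (\<beta> * c) < v (c - c')"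
      using \<open>v \<beta> < 1\<close> c(2) far mult_left_le[of "v c" "v \<beta>"] by (simp add: v_mult)
    ultimately show ?thesis
      using v_add_eq_left far by simp
  qed
  have "distK (\<alpha> * y) \<le> max (distK (\<beta> * z + \<alpha> * y)) (distK (\<beta> * z))"
    using dist_diff_le[of "\<beta> * z + \<alpha> * y" "\<beta> * z"] by simp
  moreover have "distK (\<beta> * z) < \<delta>"
    using dist_mult[OF \<open>\<beta> \<in> K\<close>] dist_z \<open>v \<beta> < 1\<close> \<open>0 < \<delta>\<close> by simp
  moreover have "\<delta> \<le> distK (\<alpha> * y)"
    using dist_mult[OF \<open>\<alpha> \<in> K\<close>] dist_y \<open>1 \<le> v \<alpha>\<close> \<open>0 < \<delta>\<close> by simp
  ultimately show False
    using less w by simp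
qed

end

lemma infinite_quotient_if_separated:
  assumes refl: "\<And>x. x \<in> A \<Longrightarrow> (x, x) \<in> R" and f: "f ` I \<subseteq> A"
    and separated: "\<And>n. \<exists>S\<subseteq>I. finite S \<and> card S = n \<and> (\<forall>i\<in>S. \<forall>j\<in>S. (f i, f j) \<in> R \<longrightarrow> i = j)"
  shows "infinite (A // R)"
proof
  assume "finite (A // R)"
  obtain S where S: "S \<subseteq> I" "finite S" "card S = Suc (card (A // R))"
    and sep: "\<forall>i\<in>S. \<forall>j\<in>S. (f i, f j) \<in> R \<longrightarrow> i = j"
    using separated[of "Suc (card (A // R))"] by blast
  have "inj_on (\<lambda>i. R `` {f i}) S"
  proof (rule inj_onI)
    fix i j
    assume "i \<in> S" "j \<in> S" and same_class: "R `` {f i} = R `` {f j}"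
    have "f j \<in> A"
      using f S(1) \<open>j \<in> S\<close> by blast
    then have "f j \<in> R `` {f i}"
      using refl same_class by simp
    then have "(f i, f j) \<in> R"
      by simp
    then show "i = j"
      using sep \<open>i \<in> S\<close> \<open>j \<in> S\<close> by blast
  qed
  moreover have "(\<lambda>i. R `` {f i}) ` S \<subseteq> A // R"
    using f S(1) by (auto intro: quotientI)
  ultimately have "card S \<le> card (A // R)"
    using \<open>finite (A // R)\<close> by (rule card_inj_on_le)
  then show False
    using S(3) by simp
qed

locale alg_closed_immediate_ext = positive_residue_char v p + valued_subfield v K
  for v :: "'b::field \<Rightarrow> real" and p :: nat and K :: "'b set" +
  assumes immediate: "immediate_ext v K" and complete: "vcomplete v K"
    and alg_closed: "alg_closed_subfield K"
begin

abbreviation sim :: "('b \<times> 'b) set" where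
  "sim \<equiv> {(x, y). x \<in> UNIV - K \<and> y \<in> UNIV - K \<and> sim_rel v K x y}"

text \<open>Choose \<open>a \<in> K\<close> with \<open>distK u < v (u - a) < t\<close> and \<open>v (u - a) \<le> v u\<close>: the smallness
  hypothesis then bounds the binomial terms of \<open>(a + (u - a))^p - a^p\<close> by \<open>v (u - a)^p\<close>.\<close>
lemma dist_power_p_le:
  assumes "u \<notin> K" and small: "v (of_nat p) * v u ^ (p - 1) \<le> distK u ^ (p - 1)"
    and "distK u < t"
  shows "distK (u ^ p) \<le> t ^ p"
proof -
  define \<rho> where "\<rho> = distK u"
  have "0 < \<rho>"
    unfolding \<rho>_def using dist_pos[OF complete \<open>u \<notin> K\<close>] .
  have "\<rho> < v u"
    unfolding \<rho>_def using dist_not_attained[OF immediate \<open>u \<notin> K\<close> zero_closed] by simp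
  obtain a where "a \<in> K" and a: "v (u - a) < \<rho> + (min t (v u) - \<rho>)"
    using dist_approx[of "min t (v u) - \<rho>" u] \<open>distK u < t\<close> \<open>\<rho> < v u\<close> unfolding \<rho>_def by auto
  define s where "s = v (u - a)"
  have "\<rho> < s"
    unfolding s_def \<rho>_def using dist_not_attained[OF immediate \<open>u \<notin> K\<close> \<open>a \<in> K\<close>] .
  have "s \<le> v u" "s \<le> t"
    using a unfolding s_def by auto
  have "v a \<le> v u"
    using v_diff_le[of u "u - a"] \<open>s \<le> v u\<close> unfolding s_def by simp
  have "\<rho> ^ (p - 1) \<le> s ^ (p - 1)"
    using \<open>0 < \<rho>\<close> \<open>\<rho> < s\<close> by (intro power_mono) auto
  then have "v ((a + (u - a)) ^ p - a ^ p) \<le> s ^ p"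
    using small \<open>v a \<le> v u\<close> \<open>s \<le> v u\<close> unfolding s_def \<rho>_def
    by (intro v_add_power_diff_le) auto
  then have "distK (u ^ p) \<le> s ^ p"
    using dist_le[OF power_closed[OF \<open>a \<in> K\<close>, of p], of "u ^ p"] by simp
  also have "s ^ p \<le> t ^ p"
    using \<open>0 < \<rho>\<close> \<open>\<rho> < s\<close> \<open>s \<le> t\<close> by (intro power_mono) auto
  finally show ?thesis .
qed

lemma dist_power_p_eq:
  assumes "u \<notin> K" and small: "v (of_nat p) * v u ^ (p - 1) \<le> distK u ^ (p - 1)"
  shows "distK (u ^ p) = distK u ^ p"
proof (rule antisym)
  have "((\<lambda>t. t ^ p) \<longlongrightarrow> distK u ^ p) (at_right (distK u))"
    by (intro tendsto_intros)
  moreover have "\<forall>\<^sub>F t in at_right (distK u). distK (u ^ p) \<le> t ^ p"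
    using eventually_at_right_less by (rule eventually_mono) (rule dist_power_p_le[OF assms])
  ultimately show "distK (u ^ p) \<le> distK u ^ p"
    by (rule tendsto_lowerbound) simp
  show "distK u ^ p \<le> distK (u ^ p)"
    using dist_power_minus_linear_ge[OF alg_closed p_ge_2 zero_closed, of u] by simp
qed

text \<open>Since \<open>v p < 1\<close>, the smallness hypothesis of \<open>dist_power_p_eq\<close> holds as soon as
  \<open>v u\<close> is close enough to \<open>distK u\<close>, which a translate \<open>u = w - a\<close> with \<open>a \<in> K\<close> achieves.\<close>
lemma exists_dist_power_p_eq:
  assumes "w \<notin> K"
  shows "\<exists>u. distK u = distK w \<and> distK (u ^ p) = distK w ^ p"
proof -
  define \<rho> where "\<rho> = distK w"
  define q where "q = v (of_nat p)"
  have "0 < \<rho>"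
    unfolding \<rho>_def using dist_pos[OF complete \<open>w \<notin> K\<close>] .
  have "((\<lambda>t. q * t ^ (p - 1)) \<longlongrightarrow> q * \<rho> ^ (p - 1)) (at_right \<rho>)"
    by (intro tendsto_intros)
  moreover have "q * \<rho> ^ (p - 1) < \<rho> ^ (p - 1)"
    unfolding q_def using v_of_nat_p_less_one \<open>0 < \<rho>\<close> by simp
  ultimately have "\<forall>\<^sub>F t in at_right \<rho>. q * t ^ (p - 1) < \<rho> ^ (p - 1)"
    by (rule order_tendstoD)
  then obtain b where "\<rho> < b" and b: "\<And>t. \<rho> < t \<Longrightarrow> t < b \<Longrightarrow> q * t ^ (p - 1) < \<rho> ^ (p - 1)"
    unfolding eventually_at_right_field by blast
  obtain a where "a \<in> K" "v (w - a) < b"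
    using dist_approx[of "b - \<rho>" w] \<open>\<rho> < b\<close> unfolding \<rho>_def by auto
  define u where "u = w - a"
  have "distK u = \<rho>"
    unfolding u_def \<rho>_def using dist_add_mem[OF uminus_closed[OF \<open>a \<in> K\<close>], of w] by simp
  have "u \<notin> K"
    unfolding u_def using \<open>w \<notin> K\<close> \<open>a \<in> K\<close> add_closed by (metis diff_add_cancel)
  have "\<rho> < v u"
    using dist_not_attained[OF immediate \<open>u \<notin> K\<close> zero_closed] \<open>distK u = \<rho>\<close> by simp
  then have "q * v u ^ (p - 1) \<le> \<rho> ^ (p - 1)"
    using b \<open>v (w - a) < b\<close> unfolding u_def by (simp add: less_imp_le)
  then have "distK (u ^ p) = \<rho> ^ p"
    using dist_power_p_eq[OF \<open>u \<notin> K\<close>] \<open>distK u = \<rho>\<close> unfolding q_def by simp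
  then show ?thesis
    using \<open>distK u = \<rho>\<close> unfolding \<rho>_def by blast
qed

lemma exists_dist_eq_power_p_power:
  assumes "w \<notin> K"
  shows "\<exists>x. distK x = distK w ^ (p ^ n)"
proof (induct n)
  case 0
  show ?case
    by auto
next
  case (Suc n)
  then obtain x where x: "distK x = distK w ^ (p ^ n)"
    by blast
  then have "x \<notin> K"
    using dist_pos[OF complete \<open>w \<notin> K\<close>] by (intro not_mem_if_dist_pos) simp
  then obtain u where "distK (u ^ p) = distK x ^ p"
    using exists_dist_power_p_eq by blast
  then show ?case
    using x by (metis power_Suc2 power_mult)
qed

text \<open>With \<open>v h = distK u\<close>, the elements \<open>y = h^(p-1) u\<close> and \<open>z = u^p\<close> are at the same distance
  \<open>\<delta>\<close> from \<open>K\<close>, and no \<open>z - l y\<close> is closer; distinct residue classes \<open>c\<close> then give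
  inequivalent elements \<open>z + c y\<close>.\<close>
lemma infinite_classes_if_dist_in_value_group:
  assumes "u \<notin> K" and pow: "distK (u ^ p) = distK u ^ p" and "h \<in> K" "v h = distK u"
  shows "infinite ((UNIV - K) // sim)"
proof -
  define \<delta> where "\<delta> = distK u ^ p"
  have "0 < \<delta>"
    unfolding \<delta>_def using dist_pos[OF complete \<open>u \<notin> K\<close>] by simp
  define y where "y = h ^ (p - 1) * u"
  define z where "z = u ^ p"
  have "distK y = v h ^ (p - 1) * distK u"
    unfolding y_def dist_mult[OF power_closed[OF \<open>h \<in> K\<close>]] v_power ..
  also have "\<dots> = \<delta>"
    unfolding \<delta>_def \<open>v h = distK u\<close> by (rule power_minus_mult[OF residue_char_pos])
  finally have dist_y: "distK y = \<delta>" .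
  have dist_z: "distK z = \<delta>"
    unfolding z_def \<delta>_def using pow .
  have indep: "\<delta> \<le> distK (z - l * y)" if "l \<in> K" for l
    using dist_power_minus_linear_ge[OF alg_closed p_ge_2,
        of "l * h ^ (p - 1)" u] mult_closed[OF that power_closed[OF \<open>h \<in> K\<close>]]
    unfolding \<delta>_def z_def y_def by (simp add: mult.assoc)
  define x where "x c = z + c * y" for c
  have x_notin: "x c \<notin> K" if "c \<in> K" "v c \<le> 1" for c
    using dist_pencil_eq[OF dist_y dist_z indep that] \<open>0 < \<delta>\<close> unfolding x_def
    by (intro not_mem_if_dist_pos) simp
  show ?thesis
  proof (rule infinite_quotient_if_separated[where f = x and I = "{c \<in> K. v c \<le> 1}"])
    show "\<And>a. a \<in> UNIV - K \<Longrightarrow> (a, a) \<in> sim"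
      by (simp add: sim_rel_refl)
    show "x ` {c \<in> K. v c \<le> 1} \<subseteq> UNIV - K"
      using x_notin by (simp add: image_subset_iff)
  next
    fix n
    obtain S where S: "S \<subseteq> {c \<in> K. v c \<le> 1}" "finite S" "card S = n"
      and far: "\<forall>c\<in>S. \<forall>c'\<in>S. c \<noteq> c' \<longrightarrow> 1 \<le> v (c - c')"
      using exists_residue_representatives[OF alg_closed, of n] by (elim exE conjE)
    have "c = c'" if "c \<in> S" "c' \<in> S" "(x c, x c') \<in> sim" for c c'
    proof (rule ccontr)
      assume "c \<noteq> c'"
      have c: "c \<in> K" "v c \<le> 1" and c': "c' \<in> K" "v c' \<le> 1"
        using S(1) that(1,2) by blast+
      have "1 \<le> v (c - c')"
        using far that(1,2) \<open>c \<noteq> c'\<close> by blast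
      then have "\<not> sim_rel v K (z + c * y) (z + c' * y)"
        using not_sim_rel_pencil[OF immediate \<open>0 < \<delta>\<close> dist_y dist_z indep c c'] by blast
      then show False
        using that(3) unfolding x_def by simp
    qed
    then show "\<exists>S\<subseteq>{c \<in> K. v c \<le> 1}. finite S \<and> card S = n \<and>
        (\<forall>i\<in>S. \<forall>j\<in>S. (x i, x j) \<in> sim \<longrightarrow> i = j)"
      using S(1-3) by (intro exI[of _ S]) simp
  qed
qed

text \<open>The value group of \<open>K\<close> is divisible, so if \<open>\<rho> = distK w\<close> is not a value then no two of
  the distances \<open>\<rho>^(p^n)\<close> differ by a value, and the corresponding elements are inequivalent.\<close>
lemma infinite_classes_if_dist_not_in_value_group:
  assumes "w \<notin> K" and not_value: "\<forall>h\<in>K. v h \<noteq> distK w"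
  shows "infinite ((UNIV - K) // sim)"
proof -
  define \<rho> where "\<rho> = distK w"
  have "0 < \<rho>"
    unfolding \<rho>_def using dist_pos[OF complete \<open>w \<notin> K\<close>] .
  obtain W where W: "\<And>n. distK (W n) = \<rho> ^ (p ^ n)"
    using exists_dist_eq_power_p_power[OF \<open>w \<notin> K\<close>] unfolding \<rho>_def by metis
  have W_pos: "0 < distK (W n)" for n
    using W \<open>0 < \<rho>\<close> by simp
  show ?thesis
  proof (rule infinite_quotient_if_separated[where f = W and I = UNIV])
    show "\<And>a. a \<in> UNIV - K \<Longrightarrow> (a, a) \<in> sim"
      by (simp add: sim_rel_refl)
    show "range W \<subseteq> UNIV - K"
      using not_mem_if_dist_pos[OF W_pos] by auto
  next
    fix n
    have "i = j" if "(W i, W j) \<in> sim" for i j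
    proof (rule ccontr)
      assume "i \<noteq> j"
      have "sim_rel v K (W i) (W j)"
        using that by simp
      then obtain l where "l \<in> K" "l \<noteq> 0" "\<rho> ^ (p ^ j) = v l * \<rho> ^ (p ^ i)"
        using sim_rel_dist_ratio[OF immediate _ W_pos] W by metis
      moreover have "p ^ j \<noteq> p ^ i"
        using \<open>i \<noteq> j\<close> p_ge_2 by simp
      ultimately have "\<exists>h\<in>K. v h = \<rho>"
        using \<open>0 < \<rho>\<close> by (intro exists_v_eq_of_power_ratio[OF alg_closed])
      then show False
        using not_value unfolding \<rho>_def by blast
    qed
    then show "\<exists>S\<subseteq>UNIV. finite S \<and> card S = n \<and> (\<forall>i\<in>S. \<forall>j\<in>S. (W i, W j) \<in> sim \<longrightarrow> i = j)"
      by (intro exI[of _ "{..<n}"]) auto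
  qed
qed

lemma infinite_sim_classes:
  assumes "K \<noteq> UNIV"
  shows "infinite ((UNIV - K) // sim)"
proof -
  obtain w where "w \<notin> K"
    using assms by blast
  show ?thesis
  proof (cases "\<exists>h\<in>K. v h = distK w")
    case True
    then obtain h where "h \<in> K" "v h = distK w"
      by blast
    obtain u where u: "distK u = distK w" "distK (u ^ p) = distK w ^ p"
      using exists_dist_power_p_eq[OF \<open>w \<notin> K\<close>] by blast
    then have "u \<notin> K"
      using dist_pos[OF complete \<open>w \<notin> K\<close>] by (intro not_mem_if_dist_pos) simp
    then show ?thesis
      using infinite_classes_if_dist_in_value_group u \<open>h \<in> K\<close> \<open>v h = distK w\<close> by simp
  next
    case False
    then show ?thesis
      using infinite_classes_if_dist_not_in_value_group[OF \<open>w \<notin> K\<close>] by blast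
  qed
qed

end

theorem mainTheorem5:
  fixes v :: "'b::field \<Rightarrow> real" and K :: "'b set"
  assumes "nonarch_abs v"
    and "subfield K"
    and "vcomplete v K"
    and "nontrivially_valued v K"
    and "\<not> spherically_complete v K"
    and "spherically_complete v UNIV"
    and "immediate_ext v K"
    and "alg_closed_subfield K"
    and "residue_char v > 0"
  shows "infinite ((UNIV - K) // {(x, y). x \<in> UNIV - K \<and> y \<in> UNIV - K \<and> sim_rel v K x y})"
proof -
  \<comment> \<open>Spherical completeness only serves to make \<open>K\<close> a proper subfield.\<close>
  interpret alg_closed_immediate_ext v "residue_char v" K
    using assms by unfold_locales auto
  have "K \<noteq> UNIV"
    using assms(5,6) by auto
  then show ?thesis
    by (rule infinite_sim_classes)
qed

end
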